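(* Let $(E,\phi)$ be a $t$-finite $t$-module of dimension $d$ over $K$ and $D\in\mathrm{Mat}_{d\times d}(K\{\tau\})$ the matrix representing $\phi_t$ in a fixed coordinate system. Then there exists $n\ge1$ such that, with $s$ the maximal $\tau$-degree of all entries of $D,D^2,\dots,D^n$, the block row matrix $(\sigma^sD,\sigma^sD^2,\dots,\sigma^sD^n)\in\mathrm{Mat}_{d\times nd}(K\{\sigma\})$ has rank $d$ modulo $\sigma^s$.
   Context: $\mathbb{F}_q$ finite field, $K$ perfect field containing $\mathbb{F}_q$, $\ell:\mathbb{F}_q[t]\to K$ an $\mathbb{F}_q$-algebra homomorphism. $K\{\tau\}$: skew polynomials with $\tau\alpha=\alpha^q\tau$, identified with $\mathbb{F}_q$-linear endomorphisms of $\mathbb{G}_a$. $K(\!(\sigma)\!)$: skew Laurent series with $\sigma\alpha=\alpha^{1/q}\sigma$, valuation ring $K[\![\sigma]\!]$, containing $K\{\sigma\}$; $K\{\tau\}\subseteq K(\!(\sigma)\!)$ via $\tau\mapsto\sigma^{-1}$. A $t$-module $(E,\phi)$ of dimension $d$: $\mathbb{F}_q$-vector space scheme $E\cong\mathbb{G}_a^d$ over $K$ with $\mathbb{F}_q$-algebra homomorphism $\phi:\mathbb{F}_q[t]\to\mathrm{End}_{\mathrm{grp},\mathbb{F}_q}(E)$, $d\phi_a-\ell(a)$ nilpotent on $\mathrm{Lie}(E)$; in a fixed coordinate system $\phi_t$ is a matrix $D$ over $K\{\tau\}$. $E$ is $t$-finite if its dual $t$-motive $\mathrm{Hom}_{\mathrm{grp},\mathbb{F}_q}(\mathbb{G}_a,E)$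 ($K\{\tau\}$ acting by pre-composition, $t$ by post-composition with $\phi_t$) is finitely generated as $K[t]$-module. Rank modulo $\sigma^s$: a matrix $B$ over $K[\![\sigma]\!]$ is diagonalized by elementary row and column operations to non-zero diagonal entries $\sigma^{\nu_1},\dots,\sigma^{\nu_n}$; it has rank $r$ modulo $\sigma^s$ if $\#\{i:\nu_i<s\}=r$. *)

theory Defs
  imports "HOL-Computational_Algebra.Polynomial"
begin

section \<open>Skew polynomials K{tau} (tau a = a^q tau), stored as 'k poly\<close>

definition frob :: "nat \<Rightarrow> 'k::field \<Rightarrow> 'k" where
  "frob q x = x ^ q"

text \<open>inverse Frobenius a \<mapsto> a^(1/q) (K perfect, so frob q is bijective)\<close>
definition frob_inv :: "nat \<Rightarrow> 'k::field \<Rightarrow> 'k" where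
  "frob_inv q = inv (frob q)"

text \<open>product in K{tau}: (a tau^i)(b tau^j) = a b^(q^i) tau^(i+j)\<close>
definition tmul :: "nat \<Rightarrow> 'k::field poly \<Rightarrow> 'k poly \<Rightarrow> 'k poly" where
  "tmul q f g = (\<Sum>i\<le>degree f. \<Sum>j\<le>degree g.
      monom (coeff f i * (frob q ^^ i) (coeff g j)) (i + j))"

text \<open>d x d matrices over K{tau} as functions nat \<Rightarrow> nat \<Rightarrow> 'k poly (indices < d)\<close>
definition tmatmul :: "nat \<Rightarrow> nat \<Rightarrow> (nat \<Rightarrow> nat \<Rightarrow> 'k::field poly)
    \<Rightarrow> (nat \<Rightarrow> nat \<Rightarrow> 'k poly) \<Rightarrow> nat \<Rightarrow> nat \<Rightarrow> 'k poly" where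
  "tmatmul q d A B i j = (\<Sum>k<d. tmul q (A i k) (B k j))"

fun tmatpow :: "nat \<Rightarrow> nat \<Rightarrow> (nat \<Rightarrow> nat \<Rightarrow> 'k::field poly) \<Rightarrow> nat
    \<Rightarrow> nat \<Rightarrow> nat \<Rightarrow> 'k poly" where
  "tmatpow q d D 0 = (\<lambda>i j. if i = j then 1 else 0)"
| "tmatpow q d D (Suc k) = tmatmul q d D (tmatpow q d D k)"

definition tmatvec :: "nat \<Rightarrow> nat \<Rightarrow> (nat \<Rightarrow> nat \<Rightarrow> 'k::field poly)
    \<Rightarrow> (nat \<Rightarrow> 'k poly) \<Rightarrow> nat \<Rightarrow> 'k poly" where
  "tmatvec q d A v i = (\<Sum>k<d. tmul q (A i k) (v k))"

definition kmatmul :: "nat \<Rightarrow> (nat \<Rightarrow> nat \<Rightarrow> 'k::field) \<Rightarrow> (nat \<Rightarrow> nat \<Rightarrow> 'k)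
    \<Rightarrow> nat \<Rightarrow> nat \<Rightarrow> 'k" where
  "kmatmul d A B i j = (\<Sum>k<d. A i k * B k j)"

fun kmatpow :: "nat \<Rightarrow> (nat \<Rightarrow> nat \<Rightarrow> 'k::field) \<Rightarrow> nat \<Rightarrow> nat \<Rightarrow> nat \<Rightarrow> 'k" where
  "kmatpow d A 0 = (\<lambda>i j. if i = j then 1 else 0)"
| "kmatpow d A (Suc k) = kmatmul d A (kmatpow d A k)"

definition kmat_nilpotent :: "nat \<Rightarrow> (nat \<Rightarrow> nat \<Rightarrow> 'k::field) \<Rightarrow> bool" where
  "kmat_nilpotent d A \<longleftrightarrow> (\<exists>N. \<forall>i<d. \<forall>j<d. kmatpow d A N i j = 0)"

text \<open>D represents phi_t of a t-module of dimension d w.r.t. theta = ell(t):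
  d phi_t - theta = (constant term of D) - theta I is nilpotent on Lie(E) = K^d\<close>
definition is_tmodule :: "'k::field \<Rightarrow> nat \<Rightarrow> (nat \<Rightarrow> nat \<Rightarrow> 'k poly) \<Rightarrow> bool" where
  "is_tmodule \<theta> d D \<longleftrightarrow>
     kmat_nilpotent d (\<lambda>i j. coeff (D i j) 0 - (if i = j then \<theta> else 0))"

text \<open>t-finite: the dual t-motive Hom(G_a,E) = K{tau}^d (column vectors m),
  with a \<in> K acting by pre-composition (m \<mapsto> m a) and t by m \<mapsto> D m,
  is finitely generated as K[t]-module.\<close>
definition t_finite :: "nat \<Rightarrow> nat \<Rightarrow> (nat \<Rightarrow> nat \<Rightarrow> 'k::field poly) \<Rightarrow> bool" where
  "t_finite q d D \<longleftrightarrow>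
     (\<exists>r::nat. \<exists>gens :: nat \<Rightarrow> nat \<Rightarrow> 'k poly.
       \<forall>m :: nat \<Rightarrow> 'k poly. \<exists>N::nat. \<exists>c :: nat \<Rightarrow> nat \<Rightarrow> 'k.
         \<forall>i<d. m i = (\<Sum>g<r. \<Sum>j<N.
             tmul q (tmatvec q d (tmatpow q d D j) (gens g) i) [:c g j:]))"

section \<open>Skew power series K[[sigma]] (sigma a = a^(1/q) sigma), as coefficient functions\<close>

definition smul :: "nat \<Rightarrow> (nat \<Rightarrow> 'k::field) \<Rightarrow> (nat \<Rightarrow> 'k) \<Rightarrow> nat \<Rightarrow> 'k" where
  "smul q f g n = (\<Sum>i\<le>n. f i * (frob_inv q ^^ i) (g (n - i)))"

definition sadd :: "(nat \<Rightarrow> 'k::field) \<Rightarrow> (nat \<Rightarrow> 'k) \<Rightarrow> nat \<Rightarrow> 'k" where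
  "sadd f g n = f n + g n"

definition szero :: "nat \<Rightarrow> 'k::field" where
  "szero = (\<lambda>n. 0)"

definition spow :: "nat \<Rightarrow> nat \<Rightarrow> 'k::field" where
  "spow \<nu> = (\<lambda>n. if n = \<nu> then 1 else 0)"

definition sunit :: "nat \<Rightarrow> (nat \<Rightarrow> 'k::field) \<Rightarrow> bool" where
  "sunit q u \<longleftrightarrow> (\<exists>v. smul q u v = spow 0 \<and> smul q v u = spow 0)"

inductive elem_reach :: "nat \<Rightarrow> nat \<Rightarrow> nat \<Rightarrow> (nat \<Rightarrow> nat \<Rightarrow> nat \<Rightarrow> 'k::field)
    \<Rightarrow> (nat \<Rightarrow> nat \<Rightarrow> nat \<Rightarrow> 'k) \<Rightarrow> bool" for q r c M where
  refl: "elem_reach q r c M M"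
| swap_row: "elem_reach q r c M M' \<Longrightarrow> i < r \<Longrightarrow> k < r \<Longrightarrow>
    elem_reach q r c M (\<lambda>a b. if a = i then M' k b else if a = k then M' i b else M' a b)"
| scale_row: "elem_reach q r c M M' \<Longrightarrow> i < r \<Longrightarrow> sunit q u \<Longrightarrow>
    elem_reach q r c M (\<lambda>a b. if a = i then smul q u (M' i b) else M' a b)"
| add_row: "elem_reach q r c M M' \<Longrightarrow> i < r \<Longrightarrow> k < r \<Longrightarrow> i \<noteq> k \<Longrightarrow>
    elem_reach q r c M (\<lambda>a b. if a = i then sadd (M' i b) (smul q x (M' k b)) else M' a b)"
| swap_col: "elem_reach q r c M M' \<Longrightarrow> i < c \<Longrightarrow> k < c \<Longrightarrow>
    elem_reach q r c M (\<lambda>a b. if b = i then M' a k else if b = k then M' a i else M' a b)"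
| scale_col: "elem_reach q r c M M' \<Longrightarrow> i < c \<Longrightarrow> sunit q u \<Longrightarrow>
    elem_reach q r c M (\<lambda>a b. if b = i then smul q (M' a i) u else M' a b)"
| add_col: "elem_reach q r c M M' \<Longrightarrow> i < c \<Longrightarrow> k < c \<Longrightarrow> i \<noteq> k \<Longrightarrow>
    elem_reach q r c M (\<lambda>a b. if b = i then sadd (M' a i) (smul q (M' a k) x) else M' a b)"

definition sdiag_form :: "nat \<Rightarrow> nat \<Rightarrow> (nat \<Rightarrow> nat \<Rightarrow> nat \<Rightarrow> 'k::field) \<Rightarrow> bool" where
  "sdiag_form r c M \<longleftrightarrow>
     (\<forall>a<r. \<forall>b<c. a \<noteq> b \<longrightarrow> M a b = szero) \<and>
     (\<forall>a<min r c. M a a = szero \<or> (\<exists>\<nu>. M a a = spow \<nu>))"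

definition rank_mod_sigma :: "nat \<Rightarrow> nat \<Rightarrow> nat \<Rightarrow> (nat \<Rightarrow> nat \<Rightarrow> nat \<Rightarrow> 'k::field)
    \<Rightarrow> nat \<Rightarrow> nat \<Rightarrow> bool" where
  "rank_mod_sigma q r c B s rk \<longleftrightarrow>
     (\<exists>M. elem_reach q r c B M \<and> sdiag_form r c M \<and>
          rk = card {a. a < min r c \<and> (\<exists>\<nu><s. M a a = spow \<nu>)})"

text \<open>sigma^s f for f \<in> K{tau} of tau-degree \<le> s, via tau = sigma^(-1):
  sigma^s a tau^j = a^(1/q^s) sigma^(s-j)\<close>
definition sigma_shift :: "nat \<Rightarrow> nat \<Rightarrow> 'k::field poly \<Rightarrow> nat \<Rightarrow> 'k" where
  "sigma_shift q s f = (\<lambda>m. if m \<le> s then (frob_inv q ^^ s) (coeff f (s - m)) else 0)"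

text \<open>(sigma^s D, sigma^s D^2, ..., sigma^s D^n), a d x nd matrix\<close>
definition block_row :: "nat \<Rightarrow> nat \<Rightarrow> (nat \<Rightarrow> nat \<Rightarrow> 'k::field poly) \<Rightarrow> nat \<Rightarrow> nat
    \<Rightarrow> nat \<Rightarrow> nat \<Rightarrow> nat \<Rightarrow> 'k" where
  "block_row q d D n s = (\<lambda>i col. sigma_shift q s (tmatpow q d D (col div d + 1) i (col mod d)))"

definition max_tau_deg :: "nat \<Rightarrow> nat \<Rightarrow> (nat \<Rightarrow> nat \<Rightarrow> 'k::field poly) \<Rightarrow> nat \<Rightarrow> nat" where
  "max_tau_deg q d D n = Max ({0} \<union>
     {degree (tmatpow q d D k i j) | k i j. 1 \<le> k \<and> k \<le> n \<and> i < d \<and> j < d})"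

end

theory Submission
  imports Defs "HOL-Computational_Algebra.Primes" "HOL-Combinatorics.Transposition"
begin

text \<open>By \<open>t\<close>-finiteness the dual \<open>t\<close>-motive \<open>K{\<tau>}\<^sup>d\<close> is generated over \<open>K[t]\<close> by finitely many
  vectors, of \<open>\<tau>\<close>-degree at most some \<open>L\<close>; so every \<open>\<tau>\<^sup>L\<^sup>+\<^sup>1 e\<^sub>a\<close> is a sum \<open>\<Sum>\<^sub>j\<^sub>\<le>\<^sub>n D\<^sup>j h\<^sub>j\<close> with
  \<open>deg h\<^sub>j \<le> L\<close>, for one \<open>n\<close> serving all \<open>a\<close>. Multiplying by \<open>\<sigma>\<^sup>s\<close> on the left and \<open>\<sigma>\<^sup>L\<close> on the right
  turns this into an identity in \<open>K[[\<sigma>]]\<close>: the block row \<open>(\<sigma>\<^sup>sD, \<dots>, \<sigma>\<^sup>sD\<^sup>n)\<close> maps the vector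
  \<open>(h\<^sub>j\<sigma>\<^sup>L)\<^sub>j\<close> to \<open>\<sigma>\<^sup>s\<^sup>-\<^sup>1 e\<^sub>a\<close> modulo \<open>\<sigma>\<^sup>s\<close>, the \<open>j = 0\<close> term being of order \<open>\<ge> s\<close>. Hence the column
  space contains \<open>\<sigma>\<^sup>s\<^sup>-\<^sup>1 K\<^sup>d\<close> modulo \<open>\<sigma>\<^sup>s\<close>. This property survives elementary row and column operations,
  and as long as it holds, Smith elimination finds a pivot of valuation \<open>< s\<close> in the remaining block;
  so it produces \<open>d\<close> diagonal entries \<open>\<sigma>\<^sup>\<nu>\<close> with \<open>\<nu> < s\<close>.\<close>

section \<open>The Frobenius automorphism\<close>

locale frobenius_field =
  fixes field :: "'k::field itself" and q :: nat
  assumes q_pos: "0 < q"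
    and frob_add: "frob q (x + y) = frob q x + frob q (y::'k)"
    and bij_frob: "bij (frob q :: 'k \<Rightarrow> 'k)"
begin

declare frob_add [simp]

abbreviation Frob :: "'k \<Rightarrow> 'k" where "Frob \<equiv> frob q"
abbreviation Frob_inv :: "'k \<Rightarrow> 'k" where "Frob_inv \<equiv> frob_inv q"

lemma frob_inv_frob [simp]: "Frob_inv (Frob x) = x"
  using bij_frob by (simp add: frob_inv_def bij_is_inj)

lemma frob_frob_inv [simp]: "Frob (Frob_inv x) = x"
  using bij_frob by (simp add: frob_inv_def bij_is_surj surj_f_inv_f)

lemma frob_mult [simp]: "Frob (x * y) = Frob x * Frob y"
  by (simp add: frob_def power_mult_distrib)

lemma frob_0 [simp]: "Frob 0 = 0"
  using q_pos by (simp add: frob_def)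

lemma frob_1 [simp]: "Frob 1 = 1"
  by (simp add: frob_def)

lemma frob_inv_add [simp]: "Frob_inv (x + y) = Frob_inv x + Frob_inv y"
  by (metis frob_add frob_inv_frob frob_frob_inv)

lemma frob_inv_mult [simp]: "Frob_inv (x * y) = Frob_inv x * Frob_inv y"
  by (metis frob_mult frob_inv_frob frob_frob_inv)

lemma frob_inv_0 [simp]: "Frob_inv 0 = 0"
  by (metis frob_0 frob_inv_frob)

lemma frob_inv_1 [simp]: "Frob_inv 1 = 1"
  by (metis frob_1 frob_inv_frob)

lemma frob_inv_uminus [simp]: "Frob_inv (- x) = - Frob_inv x"
  by (metis frob_inv_add frob_inv_0 add.right_inverse add_eq_0_iff)

lemma frob_inv_eq_0_iff [simp]: "Frob_inv x = 0 \<longleftrightarrow> x = 0"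
  by (metis frob_inv_0 frob_frob_inv)

lemma funpow_frob_inv_add [simp]: "(Frob_inv ^^ n) (x + y) = (Frob_inv ^^ n) x + (Frob_inv ^^ n) y"
  by (induction n) auto

lemma funpow_frob_inv_mult [simp]: "(Frob_inv ^^ n) (x * y) = (Frob_inv ^^ n) x * (Frob_inv ^^ n) y"
  by (induction n) auto

lemma funpow_frob_inv_0 [simp]: "(Frob_inv ^^ n) 0 = 0"
  by (induction n) auto

lemma funpow_frob_inv_1 [simp]: "(Frob_inv ^^ n) 1 = 1"
  by (induction n) auto

lemma funpow_frob_inv_uminus [simp]: "(Frob_inv ^^ n) (- x) = - (Frob_inv ^^ n) x"
  by (induction n) auto

lemma funpow_frob_inv_sum: "(Frob_inv ^^ n) (sum g A) = (\<Sum>a\<in>A. (Frob_inv ^^ n) (g a))"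
  by (induction A rule: infinite_finite_induct) auto

lemma funpow_frob_add [simp]: "(Frob ^^ n) (x + y) = (Frob ^^ n) x + (Frob ^^ n) y"
  by (induction n) auto

lemma funpow_frob_mult [simp]: "(Frob ^^ n) (x * y) = (Frob ^^ n) x * (Frob ^^ n) y"
  by (induction n) auto

lemma funpow_frob_0 [simp]: "(Frob ^^ n) 0 = 0"
  by (induction n) auto

lemma funpow_frob_sum: "(Frob ^^ n) (sum g A) = (\<Sum>a\<in>A. (Frob ^^ n) (g a))"
  by (induction A rule: infinite_finite_induct) auto

lemma funpow_frob_inv_frob [simp]: "(Frob_inv ^^ n) ((Frob ^^ n) x) = x"
proof (induction n arbitrary: x)
  case (Suc n)
  have "(Frob_inv ^^ Suc n) ((Frob ^^ Suc n) x) = Frob_inv ((Frob_inv ^^ n) ((Frob ^^ n) (Frob x)))"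
    by (simp only: funpow_Suc_right funpow.simps(2) comp_def) (simp add: funpow_swap1)
  then show ?case using Suc by simp
qed simp

lemma funpow_frob_frob_inv [simp]: "(Frob ^^ n) ((Frob_inv ^^ n) x) = x"
proof (induction n arbitrary: x)
  case (Suc n)
  have "(Frob ^^ Suc n) ((Frob_inv ^^ Suc n) x) = Frob ((Frob ^^ n) ((Frob_inv ^^ n) (Frob_inv x)))"
    by (simp only: funpow_Suc_right funpow.simps(2) comp_def) (simp add: funpow_swap1)
  then show ?case using Suc by simp
qed simp

lemma funpow_frob_inv_funpow_frob:
  "a \<le> s \<Longrightarrow> (Frob_inv ^^ s) ((Frob ^^ a) x) = (Frob_inv ^^ (s - a)) x"
proof -
  assume "a \<le> s"
  then have "Frob_inv ^^ s = (Frob_inv ^^ (s - a)) \<circ> (Frob_inv ^^ a)"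
    by (simp flip: funpow_add)
  then show ?thesis by simp
qed

lemma funpow_frob_inv_funpow_frob_inv: "(Frob_inv ^^ i) ((Frob_inv ^^ j) x) = (Frob_inv ^^ (i + j)) x"
  by (simp add: funpow_add)

lemma funpow_frob_inv_eq_0_iff [simp]: "(Frob_inv ^^ n) x = 0 \<longleftrightarrow> x = 0"
  by (metis funpow_frob_inv_0 funpow_frob_frob_inv)

lemma funpow_frob_eq_0_iff [simp]: "(Frob ^^ n) x = 0 \<longleftrightarrow> x = 0"
  by (metis funpow_frob_0 funpow_frob_inv_frob)

end

section \<open>Skew power series\<close>

definition sval_ge :: "(nat \<Rightarrow> 'a::zero) \<Rightarrow> nat \<Rightarrow> bool" where
  "sval_ge f \<nu> \<longleftrightarrow> (\<forall>n<\<nu>. f n = 0)"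

context frobenius_field
begin

lemma smul_assoc: "smul q (smul q f g) h = smul q f (smul q g (h :: nat \<Rightarrow> 'k))"
proof
  fix n
  define T where "T = (\<lambda>j k l. f j * (Frob_inv ^^ j) (g k) * (Frob_inv ^^ (j + k)) (h l))"
  have "smul q (smul q f g) h n = (\<Sum>i\<le>n. \<Sum>j\<le>i. T j (i - j) (n - i))"
    by (simp add: smul_def T_def sum_distrib_right funpow_frob_inv_sum
        funpow_frob_inv_funpow_frob_inv add.commute)
  also have "\<dots> = (\<Sum>(j, k)\<in>{(j, k). j + k \<le> n}. T j k (n - j - k))"
    by (subst sum.triangle_reindex_eq) (auto intro!: sum.cong simp: diff_diff_left)
  also have "{(j, k). j + k \<le> n} = Sigma {..n} (\<lambda>j. {..n - j})"
    by auto
  also have "(\<Sum>(j, k)\<in>Sigma {..n} (\<lambda>j. {..n - j}). T j k (n - j - k))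
      = (\<Sum>j\<le>n. \<Sum>k\<le>n - j. T j k (n - j - k))"
    by (subst sum.Sigma) auto
  also have "\<dots> = smul q f (smul q g h) n"
    by (simp add: smul_def T_def sum_distrib_left funpow_frob_inv_sum
        funpow_frob_inv_funpow_frob_inv mult.assoc add.commute)
  finally show "smul q (smul q f g) h n = smul q f (smul q g h) n" .
qed

lemma smul_sadd_right: "smul q f (sadd g h) = sadd (smul q f g) (smul q f (h :: nat \<Rightarrow> 'k))"
  by (auto simp: smul_def sadd_def sum.distrib distrib_left)

lemma smul_sadd_left: "smul q (sadd f g) h = sadd (smul q f h) (smul q g (h :: nat \<Rightarrow> 'k))"
  by (auto simp: smul_def sadd_def sum.distrib distrib_right)

lemma smul_uminus_right: "smul q f (\<lambda>n. - g n) = (\<lambda>n. - smul q f (g :: nat \<Rightarrow> 'k) n)"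
  by (auto simp: smul_def sum_negf)

lemma smul_uminus_left: "smul q (\<lambda>n. - f n) g = (\<lambda>n. - smul q f (g :: nat \<Rightarrow> 'k) n)"
  by (auto simp: smul_def sum_negf)

lemma smul_sum_right:
  "smul q f (\<lambda>n. \<Sum>a\<in>A. g a n) = (\<lambda>n. \<Sum>a\<in>A. smul q f (g a :: nat \<Rightarrow> 'k) n)"
  by (rule ext) (simp add: smul_def funpow_frob_inv_sum sum_distrib_left sum.swap[of _ A])

lemma smul_sum_left:
  "smul q (\<lambda>n. \<Sum>a\<in>A. f a n) g = (\<lambda>n. \<Sum>a\<in>A. smul q (f a) (g :: nat \<Rightarrow> 'k) n)"
  by (rule ext) (simp add: smul_def sum_distrib_right sum.swap[of _ A])

lemma smul_spow_left: "smul q (spow \<nu>) w n = (if n < \<nu> then 0 else (Frob_inv ^^ \<nu>) (w (n - \<nu>)))"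
proof -
  have "smul q (spow \<nu>) w n = (\<Sum>i\<le>n. if i = \<nu> then (Frob_inv ^^ \<nu>) (w (n - \<nu>)) else 0)"
    unfolding smul_def spow_def by (rule sum.cong) auto
  then show ?thesis by (simp add: sum.delta)
qed

lemma smul_spow_right: "smul q w (spow \<nu>) n = (if n < \<nu> then 0 else (w :: nat \<Rightarrow> 'k) (n - \<nu>))"
proof -
  have "smul q w (spow \<nu>) n = (\<Sum>i\<le>n. if i = n - \<nu> then (if n < \<nu> then 0 else w (n - \<nu>)) else 0)"
    unfolding smul_def spow_def by (rule sum.cong) (auto split: if_splits)
  then show ?thesis by (simp add: sum.delta)
qed

lemma smul_spow_0_left [simp]: "smul q (spow 0) w = (w :: nat \<Rightarrow> 'k)"
  by (rule ext) (simp add: smul_spow_left)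

lemma smul_spow_0_right [simp]: "smul q w (spow 0) = (w :: nat \<Rightarrow> 'k)"
  by (rule ext) (simp add: smul_spow_right)

lemma smul_0: "smul q f g 0 = f 0 * (g 0 :: 'k)"
  by (simp add: smul_def)

lemma smul_szero_left [simp]: "smul q szero f = szero"
  by (auto simp: smul_def szero_def)

lemma smul_szero_right [simp]: "smul q (f :: nat \<Rightarrow> 'k) szero = szero"
  by (auto simp: smul_def szero_def)

lemma sadd_szero [simp]: "sadd f szero = f" "sadd szero f = f"
  by (auto simp: sadd_def szero_def)

lemma sadd_uminus_right: "sadd f (\<lambda>n. - f n) = szero"
  by (auto simp: sadd_def szero_def)

lemma sval_ge_smul_left: "sval_ge f \<nu> \<Longrightarrow> sval_ge (smul q f (g :: nat \<Rightarrow> 'k)) \<nu>"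
  by (auto simp: sval_ge_def smul_def intro!: sum.neutral)

lemma sval_ge_factor_left:
  "sval_ge f \<nu> \<Longrightarrow> f = smul q (spow \<nu>) (\<lambda>j. (Frob ^^ \<nu>) (f (j + \<nu>)))"
  by (rule ext) (auto simp: smul_spow_left sval_ge_def)

lemma sval_ge_factor_right: "sval_ge f \<nu> \<Longrightarrow> f = smul q (\<lambda>j. f (j + \<nu>)) (spow \<nu> :: nat \<Rightarrow> 'k)"
  by (rule ext) (auto simp: smul_spow_right sval_ge_def)

text \<open>Solves \<open>w \<cdot> v = 1\<close> coefficient by coefficient.\<close>
fun sinv :: "(nat \<Rightarrow> 'k) \<Rightarrow> nat \<Rightarrow> 'k" where
  "sinv w n = (if n = 0 then inverse (w 0)
     else - inverse (w 0) * (\<Sum>i<n. w (Suc i) * (Frob_inv ^^ Suc i) (sinv w (n - Suc i))))"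

declare sinv.simps [simp del]

lemma smul_sinv: assumes "w 0 \<noteq> 0" shows "smul q w (sinv w) = spow 0"
proof
  fix n
  show "smul q w (sinv w) n = spow 0 n"
  proof (cases n)
    case 0
    then show ?thesis using assms by (simp add: smul_def spow_def sinv.simps)
  next
    case (Suc m)
    have "smul q w (sinv w) n
        = w 0 * sinv w n + (\<Sum>i<n. w (Suc i) * (Frob_inv ^^ Suc i) (sinv w (n - Suc i)))"
      unfolding smul_def by (subst sum.atMost_shift) simp
    also have "\<dots> = 0"
      using assms Suc by (subst (1) sinv.simps) (simp add: field_simps)
    finally show ?thesis using Suc by (simp add: spow_def)
  qed
qed

lemma sunit_iff: "sunit q u \<longleftrightarrow> u 0 \<noteq> (0 :: 'k)"
proof
  assume "sunit q u"
  then show "u 0 \<noteq> 0"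
    unfolding sunit_def using smul_0[of u] by (auto simp: spow_def dest!: fun_cong[where x = 0])
next
  assume u0: "u 0 \<noteq> 0"
  let ?v = "sinv u"
  have uv: "smul q u ?v = spow 0"
    using u0 by (rule smul_sinv)
  have "?v 0 \<noteq> 0"
    using u0 by (simp add: sinv.simps)
  then have vw: "smul q ?v (sinv ?v) = spow 0"
    by (rule smul_sinv)
  have "u = smul q u (smul q ?v (sinv ?v))"
    using vw by simp
  also have "\<dots> = sinv ?v"
    by (simp add: uv flip: smul_assoc)
  finally have "smul q ?v u = spow 0"
    using vw by simp
  with uv show "sunit q u"
    unfolding sunit_def by blast
qed

end

section \<open>A column space condition stable under elementary operations\<close>

definition smatvec :: "nat \<Rightarrow> nat \<Rightarrow> (nat \<Rightarrow> nat \<Rightarrow> nat \<Rightarrow> 'k::field) \<Rightarrow> (nat \<Rightarrow> nat \<Rightarrow> 'k)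
    \<Rightarrow> nat \<Rightarrow> nat \<Rightarrow> 'k" where
  "smatvec q c A x b = (\<lambda>n. \<Sum>col<c. smul q (A b col) (x col) n)"

text \<open>Modulo \<open>\<sigma>\<^sup>m\<^sup>+\<^sup>1\<close>, the column space of \<open>A\<close> contains \<open>\<sigma>\<^sup>m K\<^sup>r\<close>.\<close>
definition sigma_pow_in_colspace :: "nat \<Rightarrow> nat \<Rightarrow> nat \<Rightarrow> nat \<Rightarrow> (nat \<Rightarrow> nat \<Rightarrow> nat \<Rightarrow> 'k::field) \<Rightarrow> bool" where
  "sigma_pow_in_colspace q r c m A \<longleftrightarrow>
     (\<forall>\<kappa>. \<exists>x. \<forall>b<r. \<forall>n\<le>m. smatvec q c A x b n = (if n = m then \<kappa> b else 0))"

context frobenius_field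
begin

lemma smul_lowest_coeff:
  fixes g u :: "nat \<Rightarrow> 'k"
  assumes "\<forall>n\<le>m. g n = (if n = m then a else 0)"
  shows "\<forall>n\<le>m. smul q u g n = (if n = m then u 0 * a else 0)"
proof (intro allI impI)
  fix n assume n: "n \<le> m"
  have "smul q u g n = (\<Sum>j\<le>n. if j = 0 then (if n = m then u 0 * a else 0) else 0)"
    unfolding smul_def using assms n by (intro sum.cong) auto
  then show "smul q u g n = (if n = m then u 0 * a else 0)"
    by simp
qed

lemma sigma_pow_in_colspace_swap_rows:
  fixes A :: "nat \<Rightarrow> nat \<Rightarrow> nat \<Rightarrow> 'k"
  assumes "sigma_pow_in_colspace q r c m A" "i < r" "k < r"
  shows "sigma_pow_in_colspace q r c m (\<lambda>a b. if a = i then A k b else if a = k then A i b else A a b)"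
  unfolding sigma_pow_in_colspace_def
proof
  fix \<kappa> :: "nat \<Rightarrow> 'k"
  obtain x where x: "\<forall>b<r. \<forall>n\<le>m. smatvec q c A x b n = (if n = m then (\<kappa> \<circ> transpose i k) b else 0)"
    using assms(1) unfolding sigma_pow_in_colspace_def by blast
  have "smatvec q c (\<lambda>a b. if a = i then A k b else if a = k then A i b else A a b) x b
      = smatvec q c A x (transpose i k b)" for b
    by (auto simp: smatvec_def transpose_def)
  moreover have "transpose i k b < r" if "b < r" for b
    using assms(2,3) that by (auto simp: transpose_def)
  ultimately show "\<exists>x. \<forall>b<r. \<forall>n\<le>m.
      smatvec q c (\<lambda>a b. if a = i then A k b else if a = k then A i b else A a b) x b n
        = (if n = m then \<kappa> b else 0)"
    using x by (intro exI[of _ x]) simp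
qed

lemma sigma_pow_in_colspace_scale_row:
  fixes A :: "nat \<Rightarrow> nat \<Rightarrow> nat \<Rightarrow> 'k"
  assumes "sigma_pow_in_colspace q r c m A" "i < r" "sunit q u"
  shows "sigma_pow_in_colspace q r c m (\<lambda>a b. if a = i then smul q u (A i b) else A a b)"
  unfolding sigma_pow_in_colspace_def
proof
  fix \<kappa> :: "nat \<Rightarrow> 'k"
  obtain x where x: "\<forall>b<r. \<forall>n\<le>m. smatvec q c A x b n = (if n = m then (\<kappa>(i := \<kappa> i / u 0)) b else 0)"
    using assms(1) unfolding sigma_pow_in_colspace_def by blast
  have u0: "u 0 \<noteq> 0"
    using assms(3) by (simp add: sunit_iff)
  have row_i: "smatvec q c (\<lambda>a b. if a = i then smul q u (A i b) else A a b) x i = smul q u (smatvec q c A x i)"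
    by (simp add: smatvec_def smul_assoc smul_sum_right)
  have row_i_low: "\<forall>n\<le>m. smul q u (smatvec q c A x i) n = (if n = m then u 0 * (\<kappa> i / u 0) else 0)"
    by (rule smul_lowest_coeff) (use x assms(2) in auto)
  show "\<exists>x. \<forall>b<r. \<forall>n\<le>m. smatvec q c (\<lambda>a b. if a = i then smul q u (A i b) else A a b) x b n
      = (if n = m then \<kappa> b else 0)"
  proof (intro exI[of _ x] allI impI)
    fix b n assume "b < r" "n \<le> m"
    moreover have "smatvec q c (\<lambda>a b. if a = i then smul q u (A i b) else A a b) x b = smatvec q c A x b"
      if "b \<noteq> i"
      using that by (simp add: smatvec_def)
    ultimately show "smatvec q c (\<lambda>a b. if a = i then smul q u (A i b) else A a b) x b n
        = (if n = m then \<kappa> b else 0)"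
      using x u0 row_i row_i_low by (cases "b = i") auto
  qed
qed

lemma sigma_pow_in_colspace_add_row:
  fixes A :: "nat \<Rightarrow> nat \<Rightarrow> nat \<Rightarrow> 'k"
  assumes "sigma_pow_in_colspace q r c m A" "i < r" "k < r" "i \<noteq> k"
  shows "sigma_pow_in_colspace q r c m (\<lambda>a b. if a = i then sadd (A i b) (smul q y (A k b)) else A a b)"
  unfolding sigma_pow_in_colspace_def
proof
  fix \<kappa> :: "nat \<Rightarrow> 'k"
  obtain x where x: "\<forall>b<r. \<forall>n\<le>m. smatvec q c A x b n = (if n = m then (\<kappa>(i := \<kappa> i - y 0 * \<kappa> k)) b else 0)"
    using assms(1) unfolding sigma_pow_in_colspace_def by blast
  have row_i: "smatvec q c (\<lambda>a b. if a = i then sadd (A i b) (smul q y (A k b)) else A a b) x i n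
      = smatvec q c A x i n + smul q y (smatvec q c A x k) n" for n
    by (simp add: smatvec_def smul_assoc smul_sum_right smul_sadd_left sadd_def sum.distrib)
  have row_k_low: "\<forall>n\<le>m. smul q y (smatvec q c A x k) n = (if n = m then y 0 * \<kappa> k else 0)"
    by (rule smul_lowest_coeff) (use x assms in auto)
  show "\<exists>x. \<forall>b<r. \<forall>n\<le>m.
      smatvec q c (\<lambda>a b. if a = i then sadd (A i b) (smul q y (A k b)) else A a b) x b n
        = (if n = m then \<kappa> b else 0)"
  proof (intro exI[of _ x] allI impI)
    fix b n assume "b < r" "n \<le> m"
    moreover have "smatvec q c (\<lambda>a b. if a = i then sadd (A i b) (smul q y (A k b)) else A a b) x b
        = smatvec q c A x b" if "b \<noteq> i"
      using that by (simp add: smatvec_def)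
    ultimately show "smatvec q c (\<lambda>a b. if a = i then sadd (A i b) (smul q y (A k b)) else A a b) x b n
        = (if n = m then \<kappa> b else 0)"
      using x assms row_i row_k_low by (cases "b = i") auto
  qed
qed

text \<open>Column operations are invertible changes of the vector \<open>x\<close>.\<close>
lemma sigma_pow_in_colspace_col_opI:
  fixes A A' :: "nat \<Rightarrow> nat \<Rightarrow> nat \<Rightarrow> 'k"
  assumes "sigma_pow_in_colspace q r c m A" and "\<And>x. \<exists>x'. \<forall>b<r. smatvec q c A' x' b = smatvec q c A x b"
  shows "sigma_pow_in_colspace q r c m A'"
  unfolding sigma_pow_in_colspace_def
proof
  fix \<kappa> :: "nat \<Rightarrow> 'k"
  obtain x where x: "\<forall>b<r. \<forall>n\<le>m. smatvec q c A x b n = (if n = m then \<kappa> b else 0)"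
    using assms(1) unfolding sigma_pow_in_colspace_def by blast
  obtain x' where "\<forall>b<r. smatvec q c A' x' b = smatvec q c A x b"
    using assms(2) by blast
  with x show "\<exists>x. \<forall>b<r. \<forall>n\<le>m. smatvec q c A' x b n = (if n = m then \<kappa> b else 0)"
    by (intro exI[of _ x']) simp
qed

lemma sigma_pow_in_colspace_swap_cols:
  fixes A :: "nat \<Rightarrow> nat \<Rightarrow> nat \<Rightarrow> 'k"
  assumes "sigma_pow_in_colspace q r c m A" "i < c" "k < c"
  shows "sigma_pow_in_colspace q r c m (\<lambda>a b. if b = i then A a k else if b = k then A a i else A a b)"
proof (rule sigma_pow_in_colspace_col_opI[OF assms(1)])
  fix x
  have "smatvec q c (\<lambda>a b. if b = i then A a k else if b = k then A a i else A a b) (x \<circ> transpose i k) b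
      = smatvec q c A x b" for b
    unfolding smatvec_def
    by (rule ext, rule sum.reindex_bij_witness[where i = "transpose i k" and j = "transpose i k"])
      (use assms in \<open>auto simp: transpose_def\<close>)
  then show "\<exists>x'. \<forall>b<r.
      smatvec q c (\<lambda>a b. if b = i then A a k else if b = k then A a i else A a b) x' b = smatvec q c A x b"
    by blast
qed

lemma sigma_pow_in_colspace_scale_col:
  fixes A :: "nat \<Rightarrow> nat \<Rightarrow> nat \<Rightarrow> 'k"
  assumes "sigma_pow_in_colspace q r c m A" "i < c" "sunit q u"
  shows "sigma_pow_in_colspace q r c m (\<lambda>a b. if b = i then smul q (A a i) u else A a b)"
proof (rule sigma_pow_in_colspace_col_opI[OF assms(1)])
  fix x
  obtain v where v: "smul q u v = spow 0"
    using assms(3) unfolding sunit_def by blast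
  have "smul q (smul q (A b i) u) (smul q v (x i)) = smul q (A b i) (x i)" for b
    by (simp add: smul_assoc) (simp add: v flip: smul_assoc)
  then have "smatvec q c (\<lambda>a b. if b = i then smul q (A a i) u else A a b) (x(i := smul q v (x i))) b
      = smatvec q c A x b" for b
    unfolding smatvec_def by (intro ext sum.cong) auto
  then show "\<exists>x'. \<forall>b<r.
      smatvec q c (\<lambda>a b. if b = i then smul q (A a i) u else A a b) x' b = smatvec q c A x b"
    by blast
qed

lemma sigma_pow_in_colspace_add_col:
  fixes A :: "nat \<Rightarrow> nat \<Rightarrow> nat \<Rightarrow> 'k"
  assumes "sigma_pow_in_colspace q r c m A" "i < c" "k < c" "i \<noteq> k"
  shows "sigma_pow_in_colspace q r c m (\<lambda>a b. if b = i then sadd (A a i) (smul q (A a k) y) else A a b)"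
proof (rule sigma_pow_in_colspace_col_opI[OF assms(1)])
  fix x
  let ?A' = "\<lambda>a b. if b = i then sadd (A a i) (smul q (A a k) y) else A a b"
  let ?x' = "x(k := sadd (x k) (smul q (\<lambda>n. - y n) (x i)))"
  have "(\<Sum>col<c. smul q (?A' b col) (?x' col) n)
      = (\<Sum>col<c. smul q (A b col) (x col) n + ((if col = i then smul q (smul q (A b k) y) (x i) n else 0)
            + (if col = k then - smul q (smul q (A b k) y) (x i) n else 0)))" for b n
    using assms(4) by (intro sum.cong)
      (auto simp: smul_sadd_left smul_sadd_right sadd_def smul_uminus_left smul_uminus_right smul_assoc)
  also have "\<dots> b n = (\<Sum>col<c. smul q (A b col) (x col) n)" for b n
    using assms(2,3) by (simp add: sum.distrib)
  finally have "smatvec q c ?A' ?x' b = smatvec q c A x b" for b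
    unfolding smatvec_def by (intro ext)
  then show "\<exists>x'. \<forall>b<r. smatvec q c ?A' x' b = smatvec q c A x b"
    by blast
qed

lemma sigma_pow_in_colspace_elem_reach:
  fixes A B :: "nat \<Rightarrow> nat \<Rightarrow> nat \<Rightarrow> 'k"
  assumes "elem_reach q r c A B" "sigma_pow_in_colspace q r c m A"
  shows "sigma_pow_in_colspace q r c m B"
  using assms
proof induction
  case refl
  then show ?case .
next
  case swap_row
  then show ?case by (blast intro: sigma_pow_in_colspace_swap_rows)
next
  case scale_row
  then show ?case by (blast intro: sigma_pow_in_colspace_scale_row)
next
  case add_row
  then show ?case by (blast intro: sigma_pow_in_colspace_add_row)
next
  case swap_col
  then show ?case by (blast intro: sigma_pow_in_colspace_swap_cols)
next
  case scale_col
  then show ?case by (blast intro: sigma_pow_in_colspace_scale_col)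
next
  case add_col
  then show ?case by (blast intro: sigma_pow_in_colspace_add_col)
qed

end

section \<open>Diagonalisation by elementary operations\<close>

definition diag_prefix :: "nat \<Rightarrow> nat \<Rightarrow> nat \<Rightarrow> nat \<Rightarrow> (nat \<Rightarrow> nat \<Rightarrow> nat \<Rightarrow> 'k::field) \<Rightarrow> bool" where
  "diag_prefix m r c k A \<longleftrightarrow>
     (\<forall>a<k. (\<forall>b<c. b \<noteq> a \<longrightarrow> A a b = szero) \<and> (\<forall>b<r. b \<noteq> a \<longrightarrow> A b a = szero)
        \<and> (\<exists>\<nu>\<le>m. A a a = spow \<nu>))"

context frobenius_field
begin

lemma diag_prefix_swap_rows:
  "diag_prefix m r c k A \<Longrightarrow> k \<le> i \<Longrightarrow> k \<le> i' \<Longrightarrow> i < r \<Longrightarrow> i' < r \<Longrightarrow>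
    diag_prefix m r c k (\<lambda>a b. if a = i then A i' b else if a = i' then A i b else A a b)"
  unfolding diag_prefix_def by auto

lemma diag_prefix_swap_cols:
  "diag_prefix m r c k A \<Longrightarrow> k \<le> i \<Longrightarrow> k \<le> i' \<Longrightarrow> i < c \<Longrightarrow> i' < c \<Longrightarrow>
    diag_prefix m r c k (\<lambda>a b. if b = i then A a i' else if b = i' then A a i else A a b)"
  unfolding diag_prefix_def by auto

lemma diag_prefix_scale_col:
  "diag_prefix m r c k A \<Longrightarrow> k \<le> i \<Longrightarrow> i < c \<Longrightarrow>
    diag_prefix m r c k (\<lambda>a b. if b = i then smul q (A a i) u else A a b)"
  unfolding diag_prefix_def by auto

lemma diag_prefix_add_row:
  "diag_prefix m r c k (A :: nat \<Rightarrow> nat \<Rightarrow> nat \<Rightarrow> 'k) \<Longrightarrow> k \<le> i \<Longrightarrow> k \<le> i' \<Longrightarrow> i < r \<Longrightarrow> i' < r \<Longrightarrow>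
    diag_prefix m r c k (\<lambda>a b. if a = i then sadd (A i b) (smul q y (A i' b)) else A a b)"
  unfolding diag_prefix_def by auto

lemma diag_prefix_add_col:
  "diag_prefix m r c k A \<Longrightarrow> k \<le> i \<Longrightarrow> k \<le> i' \<Longrightarrow> i < c \<Longrightarrow> i' < c \<Longrightarrow>
    diag_prefix m r c k (\<lambda>a b. if b = i then sadd (A a i) (smul q (A a i') y) else A a b)"
  unfolding diag_prefix_def by auto

lemma pivot_row_elim:
  fixes B :: "nat \<Rightarrow> nat \<Rightarrow> nat \<Rightarrow> 'k"
  assumes reach: "elem_reach q r c A0 B" and diag: "diag_prefix m r c k B"
    and "k < j" "j < c" and pivot: "B k k = spow \<nu>" and val: "sval_ge (B k j) \<nu>"
  obtains B' where "elem_reach q r c A0 B'" "diag_prefix m r c k B'" "B' k j = szero"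
    "\<And>a b. b \<noteq> j \<Longrightarrow> B' a b = B a b"
proof -
  define y where "y = (\<lambda>i. (Frob ^^ \<nu>) (B k j (i + \<nu>)))"
  have factor: "B k j = smul q (spow \<nu>) y"
    unfolding y_def using val by (rule sval_ge_factor_left)
  define B' where "B' = (\<lambda>a b. if b = j then sadd (B a j) (smul q (B a k) (\<lambda>n. - y n)) else B a b)"
  have "elem_reach q r c A0 B'"
    unfolding B'_def using assms by (intro elem_reach.add_col) auto
  moreover have "diag_prefix m r c k B'"
    unfolding B'_def using assms by (intro diag_prefix_add_col) auto
  moreover have "B' k j = szero"
    unfolding B'_def using factor pivot by (simp add: smul_uminus_right sadd_uminus_right)
  ultimately show ?thesis
    using that by (simp add: B'_def)
qed

lemma pivot_col_elim:
  fixes B :: "nat \<Rightarrow> nat \<Rightarrow> nat \<Rightarrow> 'k"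
  assumes reach: "elem_reach q r c A0 B" and diag: "diag_prefix m r c k B"
    and "k < j" "j < r" and pivot: "B k k = spow \<nu>" and val: "sval_ge (B j k) \<nu>"
  obtains B' where "elem_reach q r c A0 B'" "diag_prefix m r c k B'" "B' j k = szero"
    "\<And>a b. a \<noteq> j \<Longrightarrow> B' a b = B a b"
proof -
  define y where "y = (\<lambda>i. B j k (i + \<nu>))"
  have factor: "B j k = smul q y (spow \<nu>)"
    unfolding y_def using val by (rule sval_ge_factor_right)
  define B' where "B' = (\<lambda>a b. if a = j then sadd (B j b) (smul q (\<lambda>n. - y n) (B k b)) else B a b)"
  have "elem_reach q r c A0 B'"
    unfolding B'_def using assms by (intro elem_reach.add_row) auto
  moreover have "diag_prefix m r c k B'"
    unfolding B'_def using assms by (intro diag_prefix_add_row) auto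
  moreover have "B' j k = szero"
    unfolding B'_def using factor pivot by (simp add: smul_uminus_left sadd_uminus_right)
  ultimately show ?thesis
    using that by (simp add: B'_def)
qed

lemma clear_pivot_row:
  fixes B :: "nat \<Rightarrow> nat \<Rightarrow> nat \<Rightarrow> 'k"
  assumes reach: "elem_reach q r c A0 B" and diag: "diag_prefix m r c k B"
    and kr: "k < r" "k < c" and pivot: "B k k = spow \<nu>"
    and row_val: "\<forall>b. k < b \<and> b < c \<longrightarrow> sval_ge (B k b) \<nu>"
  shows "\<exists>B'. elem_reach q r c A0 B' \<and> diag_prefix m r c k B'
     \<and> (\<forall>b<c. b \<noteq> k \<longrightarrow> B' k b = szero) \<and> (\<forall>a. B' a k = B a k)"
proof -
  have "\<exists>B'. elem_reach q r c A0 B' \<and> diag_prefix m r c k B'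
     \<and> (\<forall>b. k < b \<and> b < Suc k + t \<longrightarrow> B' k b = szero) \<and> (\<forall>b. Suc k + t \<le> b \<longrightarrow> B' k b = B k b)
     \<and> (\<forall>a. B' a k = B a k)" if "Suc k + t \<le> c" for t
    using that
  proof (induction t)
    case 0
    show ?case
      using reach diag by (intro exI[of _ B]) auto
  next
    case (Suc t)
    then obtain B1 where B1: "elem_reach q r c A0 B1" "diag_prefix m r c k B1"
      "\<forall>b. k < b \<and> b < Suc k + t \<longrightarrow> B1 k b = szero"
      "\<forall>b. Suc k + t \<le> b \<longrightarrow> B1 k b = B k b" "\<forall>a. B1 a k = B a k"
      by auto
    have j: "k < Suc k + t" "Suc k + t < c"
      using Suc.prems by auto
    have "B1 k k = spow \<nu>" "sval_ge (B1 k (Suc k + t)) \<nu>"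
      using pivot row_val B1(4,5) j by auto
    then obtain B2 where "elem_reach q r c A0 B2" "diag_prefix m r c k B2" "B2 k (Suc k + t) = szero"
        "\<And>a b. b \<noteq> Suc k + t \<Longrightarrow> B2 a b = B1 a b"
      using pivot_row_elim[OF B1(1,2) j] by blast
    with B1(3-5) show ?case
      by (intro exI[of _ B2]) (auto simp: less_Suc_eq)
  qed
  from this[of "c - Suc k"] obtain B' where B': "elem_reach q r c A0 B'" "diag_prefix m r c k B'"
     "\<forall>b. k < b \<and> b < c \<longrightarrow> B' k b = szero" "\<forall>a. B' a k = B a k"
    using kr by auto
  moreover have "\<forall>b<k. B' k b = szero"
    using B'(2) kr unfolding diag_prefix_def by auto
  ultimately show ?thesis
    by (metis linorder_neqE_nat)
qed

lemma clear_pivot_col: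
  fixes B :: "nat \<Rightarrow> nat \<Rightarrow> nat \<Rightarrow> 'k"
  assumes reach: "elem_reach q r c A0 B" and diag: "diag_prefix m r c k B"
    and kr: "k < r" "k < c" and pivot: "B k k = spow \<nu>" and "\<nu> \<le> m"
    and row_cleared: "\<forall>b<c. b \<noteq> k \<longrightarrow> B k b = szero"
    and col_val: "\<forall>a. k < a \<and> a < r \<longrightarrow> sval_ge (B a k) \<nu>"
  shows "\<exists>B'. elem_reach q r c A0 B' \<and> diag_prefix m r c (Suc k) B'"
proof -
  have "\<exists>B'. elem_reach q r c A0 B' \<and> diag_prefix m r c k B'
     \<and> (\<forall>a. k < a \<and> a < Suc k + t \<longrightarrow> B' a k = szero) \<and> (\<forall>a. Suc k + t \<le> a \<longrightarrow> B' a k = B a k)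
     \<and> (\<forall>b. B' k b = B k b)" if "Suc k + t \<le> r" for t
    using that
  proof (induction t)
    case 0
    show ?case
      using reach diag by (intro exI[of _ B]) auto
  next
    case (Suc t)
    then obtain B1 where B1: "elem_reach q r c A0 B1" "diag_prefix m r c k B1"
      "\<forall>a. k < a \<and> a < Suc k + t \<longrightarrow> B1 a k = szero"
      "\<forall>a. Suc k + t \<le> a \<longrightarrow> B1 a k = B a k" "\<forall>b. B1 k b = B k b"
      by auto
    have j: "k < Suc k + t" "Suc k + t < r"
      using Suc.prems by auto
    have "B1 k k = spow \<nu>" "sval_ge (B1 (Suc k + t) k) \<nu>"
      using pivot col_val B1(4,5) j by auto
    then obtain B2 where "elem_reach q r c A0 B2" "diag_prefix m r c k B2" "B2 (Suc k + t) k = szero"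
        "\<And>a b. a \<noteq> Suc k + t \<Longrightarrow> B2 a b = B1 a b"
      using pivot_col_elim[OF B1(1,2) j] by blast
    with B1(3-5) show ?case
      by (intro exI[of _ B2]) (auto simp: less_Suc_eq)
  qed
  from this[of "r - Suc k"] obtain B' where B': "elem_reach q r c A0 B'" "diag_prefix m r c k B'"
     "\<forall>a. k < a \<and> a < r \<longrightarrow> B' a k = szero" "\<forall>b. B' k b = B k b"
    using kr by auto
  have "\<forall>a<k. B' a k = szero"
    using B'(2) kr unfolding diag_prefix_def by auto
  with B' have "\<forall>a<r. a \<noteq> k \<longrightarrow> B' a k = szero"
    by (metis linorder_neqE_nat)
  with B'(2,4) row_cleared pivot \<open>\<nu> \<le> m\<close> have "diag_prefix m r c (Suc k) B'"
    unfolding diag_prefix_def by (auto simp: less_Suc_eq)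
  with B'(1) show ?thesis
    by blast
qed

text \<open>Row \<open>k\<close> must reach \<open>\<sigma>\<^sup>m e\<^sub>k\<close> modulo \<open>\<sigma>\<^sup>m\<^sup>+\<^sup>1\<close>, and its first \<open>k\<close> entries vanish.\<close>
lemma low_order_entry_in_row:
  fixes B :: "nat \<Rightarrow> nat \<Rightarrow> nat \<Rightarrow> 'k"
  assumes span: "sigma_pow_in_colspace q r c m B" and diag: "diag_prefix m r c k B" and kr: "k < r"
  obtains b n where "k \<le> b" "b < c" "n \<le> m" "B k b n \<noteq> 0"
proof (rule ccontr)
  assume "\<not> thesis"
  with that have high: "sval_ge (B k b) (Suc m)" if "k \<le> b" "b < c" for b
    using \<open>k \<le> b\<close> \<open>b < c\<close> by (auto simp: sval_ge_def less_Suc_eq_le)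
  obtain x where x: "\<forall>b<r. \<forall>n\<le>m. smatvec q c B x b n = (if n = m then (if b = k then 1 else 0) else 0)"
    using span unfolding sigma_pow_in_colspace_def by (elim allE[of _ "\<lambda>b. if b = k then 1 else 0"]) blast
  have "smul q (B k b) (x b) m = 0" if "b < c" for b
  proof (cases "b < k")
    case True
    then have "B k b = szero"
      using diag kr that unfolding diag_prefix_def by auto
    then show ?thesis
      by (simp add: smul_def szero_def)
  next
    case False
    with high that have "sval_ge (smul q (B k b) (x b)) (Suc m)"
      by (auto intro: sval_ge_smul_left)
    then show ?thesis
      by (simp add: sval_ge_def)
  qed
  then have "smatvec q c B x k m = 0"
    by (simp add: smatvec_def)
  with x kr show False
    by simp
qed

lemma min_valuation_pivot:
  fixes B :: "nat \<Rightarrow> nat \<Rightarrow> nat \<Rightarrow> 'k"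
  assumes span: "sigma_pow_in_colspace q r c m B" and diag: "diag_prefix m r c k B" and kr: "k < r"
  obtains a0 b0 \<nu> where "k \<le> a0" "a0 < r" "k \<le> b0" "b0 < c" "\<nu> \<le> m" "B a0 b0 \<nu> \<noteq> 0"
    and "\<And>a b. k \<le> a \<Longrightarrow> a < r \<Longrightarrow> k \<le> b \<Longrightarrow> b < c \<Longrightarrow> sval_ge (B a b) \<nu>"
proof -
  obtain b1 n1 where b1: "k \<le> b1" "b1 < c" "n1 \<le> m" "B k b1 n1 \<noteq> 0"
    using low_order_entry_in_row[OF span diag kr] by blast
  define Q where "Q = (\<lambda>n. \<exists>a b. k \<le> a \<and> a < r \<and> k \<le> b \<and> b < c \<and> B a b n \<noteq> 0)"
  define \<nu> where "\<nu> = (LEAST n. Q n)"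
  have "Q n1"
    unfolding Q_def using b1 kr by blast
  then have "Q \<nu>" and "\<nu> \<le> n1"
    unfolding \<nu>_def by (rule LeastI, rule Least_le)
  then obtain a0 b0 where "k \<le> a0" "a0 < r" "k \<le> b0" "b0 < c" "B a0 b0 \<nu> \<noteq> 0"
    unfolding Q_def by blast
  moreover have "sval_ge (B a b) \<nu>" if "k \<le> a" "a < r" "k \<le> b" "b < c" for a b
    unfolding sval_ge_def
  proof (intro allI impI)
    fix n assume "n < \<nu>"
    then have "\<not> Q n"
      unfolding \<nu>_def by (rule not_less_Least)
    with that show "B a b n = 0"
      unfolding Q_def by blast
  qed
  moreover have "\<nu> \<le> m"
    using \<open>\<nu> \<le> n1\<close> b1(3) by simp
  ultimately show ?thesis
    using that by blast
qed

lemma move_pivot: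
  fixes B :: "nat \<Rightarrow> nat \<Rightarrow> nat \<Rightarrow> 'k"
  assumes reach: "elem_reach q r c A0 B" and diag: "diag_prefix m r c k B"
    and pivot: "k \<le> a0" "a0 < r" "k \<le> b0" "b0 < c" "B a0 b0 \<nu> \<noteq> 0"
    and min_val: "\<And>a b. k \<le> a \<Longrightarrow> a < r \<Longrightarrow> k \<le> b \<Longrightarrow> b < c \<Longrightarrow> sval_ge (B a b) \<nu>"
  shows "\<exists>B'. elem_reach q r c A0 B' \<and> diag_prefix m r c k B' \<and> B' k k = spow \<nu>
    \<and> (\<forall>b. k < b \<and> b < c \<longrightarrow> sval_ge (B' k b) \<nu>) \<and> (\<forall>a. k < a \<and> a < r \<longrightarrow> sval_ge (B' a k) \<nu>)"
proof -
  have kr: "k < r" and kc: "k < c"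
    using pivot by auto
  define B1 where "B1 = (\<lambda>a b. if a = k then B a0 b else if a = a0 then B k b else B a b)"
  define B2 where "B2 = (\<lambda>a b. if b = k then B1 a b0 else if b = b0 then B1 a k else B1 a b)"
  have reach2: "elem_reach q r c A0 B2"
    unfolding B2_def B1_def by (intro elem_reach.swap_col elem_reach.swap_row reach kr kc pivot)
  have diag2: "diag_prefix m r c k B2"
    unfolding B2_def B1_def
    by (intro diag_prefix_swap_cols diag_prefix_swap_rows diag order.refl kr kc pivot)
  have B2_eq: "B2 a b = B (transpose k a0 a) (transpose k b0 b)" for a b
    by (simp add: B2_def B1_def transpose_def)
  have val2: "sval_ge (B2 a b) \<nu>" if "k \<le> a" "a < r" "k \<le> b" "b < c" for a b
    unfolding B2_eq using that pivot by (intro min_val) (auto simp: transpose_def)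
  define w where "w = (\<lambda>j. (Frob ^^ \<nu>) (B2 k k (j + \<nu>)))"
  have factor: "B2 k k = smul q (spow \<nu>) w"
    unfolding w_def by (rule sval_ge_factor_left) (use val2 kr kc in auto)
  have w0: "w 0 \<noteq> 0"
    using pivot by (simp add: w_def B2_eq)
  define B3 where "B3 = (\<lambda>a b. if b = k then smul q (B2 a k) (sinv w) else B2 a b)"
  have unit: "sunit q (sinv w)"
    using w0 by (simp add: sunit_iff sinv.simps)
  have "elem_reach q r c A0 B3"
    unfolding B3_def by (rule elem_reach.scale_col[OF reach2 kc unit])
  moreover have "diag_prefix m r c k B3"
    unfolding B3_def by (rule diag_prefix_scale_col[OF diag2 order.refl kc])
  moreover have "B3 k k = spow \<nu>"
    using w0 by (simp add: B3_def factor smul_assoc smul_sinv)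
  moreover have "\<forall>b. k < b \<and> b < c \<longrightarrow> sval_ge (B3 k b) \<nu>"
    using val2 kr by (simp add: B3_def)
  moreover have "\<forall>a. k < a \<and> a < r \<longrightarrow> sval_ge (B3 a k) \<nu>"
    using val2 kc by (simp add: B3_def sval_ge_smul_left)
  ultimately show ?thesis
    by blast
qed

lemma diag_prefix_Suc:
  fixes A0 B :: "nat \<Rightarrow> nat \<Rightarrow> nat \<Rightarrow> 'k"
  assumes span: "sigma_pow_in_colspace q r c m A0" and reach: "elem_reach q r c A0 B"
    and diag: "diag_prefix m r c k B" and kr: "k < r"
  shows "\<exists>B'. elem_reach q r c A0 B' \<and> diag_prefix m r c (Suc k) B' \<and> k < c"
proof -
  have "sigma_pow_in_colspace q r c m B"
    using reach span by (rule sigma_pow_in_colspace_elem_reach)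
  obtain a0 b0 \<nu> where pivot: "k \<le> a0" "a0 < r" "k \<le> b0" "b0 < c" "\<nu> \<le> m" "B a0 b0 \<nu> \<noteq> 0"
    and min_val: "\<And>a b. k \<le> a \<Longrightarrow> a < r \<Longrightarrow> k \<le> b \<Longrightarrow> b < c \<Longrightarrow> sval_ge (B a b) \<nu>"
    using min_valuation_pivot[OF \<open>sigma_pow_in_colspace q r c m B\<close> diag kr] by blast
  have kc: "k < c"
    using pivot by simp
  obtain B1 where B1: "elem_reach q r c A0 B1" "diag_prefix m r c k B1" "B1 k k = spow \<nu>"
      "\<forall>b. k < b \<and> b < c \<longrightarrow> sval_ge (B1 k b) \<nu>" "\<forall>a. k < a \<and> a < r \<longrightarrow> sval_ge (B1 a k) \<nu>"
    using move_pivot[OF reach diag pivot(1-4,6) min_val] by blast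
  obtain B2 where B2: "elem_reach q r c A0 B2" "diag_prefix m r c k B2"
      "\<forall>b<c. b \<noteq> k \<longrightarrow> B2 k b = szero" "\<forall>a. B2 a k = B1 a k"
    using clear_pivot_row[OF B1(1,2) kr kc B1(3,4)] by blast
  obtain B3 where "elem_reach q r c A0 B3" "diag_prefix m r c (Suc k) B3"
    using clear_pivot_col[OF B2(1,2) kr kc _ pivot(5) B2(3)] B1(3,5) B2(4) by auto
  with kc show ?thesis
    by blast
qed

lemma diag_prefix_exists:
  fixes A0 :: "nat \<Rightarrow> nat \<Rightarrow> nat \<Rightarrow> 'k"
  assumes "sigma_pow_in_colspace q r c m A0" and "k \<le> r"
  shows "\<exists>B. elem_reach q r c A0 B \<and> diag_prefix m r c k B \<and> k \<le> c"
  using assms(2)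
proof (induction k)
  case 0
  show ?case
    by (auto simp: diag_prefix_def intro: elem_reach.refl)
next
  case (Suc k)
  then obtain B where "elem_reach q r c A0 B" "diag_prefix m r c k B"
    by auto
  with Suc.prems show ?case
    using diag_prefix_Suc[OF assms(1)] by fastforce
qed

theorem rank_mod_sigma_if_sigma_pow_in_colspace:
  fixes A :: "nat \<Rightarrow> nat \<Rightarrow> nat \<Rightarrow> 'k"
  assumes "sigma_pow_in_colspace q r c m A"
  shows "rank_mod_sigma q r c A (Suc m) r"
proof -
  obtain B where B: "elem_reach q r c A B" "diag_prefix m r c r B" "r \<le> c"
    using diag_prefix_exists[OF assms order.refl] by blast
  have "sdiag_form r c B"
    using B unfolding sdiag_form_def diag_prefix_def by auto
  moreover have "{a. a < min r c \<and> (\<exists>\<nu><Suc m. B a a = spow \<nu>)} = {..<r}"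
    using B unfolding diag_prefix_def by (auto simp: less_Suc_eq_le)
  ultimately show ?thesis
    unfolding rank_mod_sigma_def using B by (intro exI[of _ B]) auto
qed

end

section \<open>Skew polynomials inside skew power series\<close>

text \<open>\<open>\<sigma>\<^sup>s f \<sigma>\<^sup>L\<close> for \<open>f \<in> K{\<tau>}\<close> of \<open>\<tau>\<close>-degree \<open>\<le> s + L\<close>, via \<open>\<tau> = \<sigma>\<^sup>-\<^sup>1\<close>;
  \<open>sigma_shift\<close> is the case \<open>L = 0\<close>.\<close>
definition sigma_shift_lr :: "nat \<Rightarrow> nat \<Rightarrow> nat \<Rightarrow> 'k::field poly \<Rightarrow> nat \<Rightarrow> 'k" where
  "sigma_shift_lr q s L f = (\<lambda>n. if n \<le> s + L then (frob_inv q ^^ s) (coeff f (s + L - n)) else 0)"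

context frobenius_field
begin

lemma sigma_shift_lr_0 [simp]: "sigma_shift_lr q s L (0 :: 'k poly) = (\<lambda>n. 0)"
  by (simp add: sigma_shift_lr_def fun_eq_iff)

lemma tmul_coeff:
  fixes f g :: "'k poly"
  shows "coeff (tmul q f g) n = (\<Sum>i\<le>n. coeff f i * (Frob ^^ i) (coeff g (n - i)))"
proof -
  define T where "T = (\<lambda>i. coeff f i * (Frob ^^ i) (coeff g (n - i)))"
  have "coeff (tmul q f g) n
      = (\<Sum>i\<le>degree f. \<Sum>j\<le>degree g. if i + j = n then coeff f i * (Frob ^^ i) (coeff g j) else 0)"
    by (simp add: tmul_def coeff_sum)
  also have "\<dots> = (\<Sum>i\<le>degree f. if i \<le> n then T i else 0)"
  proof (rule sum.cong[OF HOL.refl])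
    fix i
    have "(\<Sum>j\<le>degree g. if i + j = n then coeff f i * (Frob ^^ i) (coeff g j) else 0)
        = (\<Sum>j\<le>degree g. if j = n - i then T i else 0)" if "i \<le> n"
      using that by (intro sum.cong) (auto simp: T_def)
    also have "\<dots> = T i"
      by (auto simp: T_def coeff_eq_0)
    finally show "(\<Sum>j\<le>degree g. if i + j = n then coeff f i * (Frob ^^ i) (coeff g j) else 0)
        = (if i \<le> n then T i else 0)"
      by auto
  qed
  also have "\<dots> = (\<Sum>i\<le>degree f + n. if i \<le> n then T i else 0)"
    by (rule sum.mono_neutral_left) (auto simp: T_def coeff_eq_0)
  also have "\<dots> = (\<Sum>i\<le>n. if i \<le> n then T i else 0)"
    by (rule sum.mono_neutral_right) auto
  finally show ?thesis
    by (simp add: T_def)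
qed

lemma tmul_const_right_coeff: "coeff (tmul q f [:c:]) n = coeff f n * (Frob ^^ n) (c :: 'k)"
proof -
  have "coeff (tmul q f [:c:]) n = (\<Sum>i\<le>n. if i = n then coeff f n * (Frob ^^ n) c else 0)"
    unfolding tmul_coeff by (intro sum.cong) (auto simp: coeff_pCons split: nat.split)
  then show ?thesis
    by simp
qed

lemma tmul_assoc_const:
  fixes f g :: "'k poly"
  shows "tmul q (tmul q f g) [:c:] = tmul q f (tmul q g [:c:])"
proof (rule poly_eqI)
  fix n
  have "(Frob ^^ i) ((Frob ^^ (n - i)) c) = (Frob ^^ (i + (n - i))) c" for i
    by (simp add: funpow_add)
  then have "(Frob ^^ i) ((Frob ^^ (n - i)) c) = (Frob ^^ n) c" if "i \<le> n" for i
    using that by simp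
  then have "coeff (tmul q f (tmul q g [:c:])) n = (\<Sum>i\<le>n. coeff f i * (Frob ^^ i) (coeff g (n - i)) * (Frob ^^ n) c)"
    unfolding tmul_coeff[of f] by (intro sum.cong) (auto simp: tmul_const_right_coeff mult.assoc)
  also have "\<dots> = coeff (tmul q (tmul q f g) [:c:]) n"
    by (simp add: tmul_const_right_coeff tmul_coeff[of f g] sum_distrib_right)
  finally show "coeff (tmul q (tmul q f g) [:c:]) n = coeff (tmul q f (tmul q g [:c:])) n" ..
qed

lemma tmul_sum_right: "tmul q f (\<Sum>a\<in>A. g a) = (\<Sum>a\<in>A. tmul q f (g a :: 'k poly))"
  by (rule poly_eqI) (simp add: tmul_coeff coeff_sum funpow_frob_sum sum_distrib_left sum.swap[of _ A])

lemma tmul_sum_left: "tmul q (\<Sum>a\<in>A. f a) g = (\<Sum>a\<in>A. tmul q (f a) (g :: 'k poly))"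
  by (rule poly_eqI) (simp add: tmul_coeff coeff_sum sum_distrib_right sum.swap[of _ A])

lemma tmul_1_left: "tmul q 1 g = (g :: 'k poly)"
proof (rule poly_eqI)
  fix n
  have "coeff (tmul q 1 g) n = (\<Sum>i\<le>n. if i = 0 then coeff g n else 0)"
    unfolding tmul_coeff by (intro sum.cong) (auto simp: coeff_1)
  then show "coeff (tmul q 1 g) n = coeff g n"
    by simp
qed

lemma tmul_0_left: "tmul q 0 (g :: 'k poly) = 0"
  by (rule poly_eqI) (simp add: tmul_coeff)

lemma tmul_0_right: "tmul q (f :: 'k poly) 0 = 0"
  by (rule poly_eqI) (simp add: tmul_coeff)

lemma degree_tmul_le: "degree (tmul q f g) \<le> degree f + degree (g :: 'k poly)"
proof (rule degree_le, intro allI impI)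
  fix n assume n: "degree f + degree g < n"
  have "coeff f i * (Frob ^^ i) (coeff g (n - i)) = 0" for i
    using n by (cases "i \<le> degree f") (simp_all add: coeff_eq_0)
  then show "coeff (tmul q f g) n = 0"
    unfolding tmul_coeff by (intro sum.neutral ballI)
qed

lemma sigma_shift_lr_sum: "sigma_shift_lr q s L (\<Sum>a\<in>A. f a) n = (\<Sum>a\<in>A. sigma_shift_lr q s L (f a :: 'k poly) n)"
  by (simp add: sigma_shift_lr_def coeff_sum funpow_frob_inv_sum)

text \<open>\<open>(\<sigma>\<^sup>s f) (h \<sigma>\<^sup>L) = \<sigma>\<^sup>s (f h) \<sigma>\<^sup>L\<close>: the embedding of \<open>K{\<tau>}\<close> into \<open>K((\<sigma>))\<close> is multiplicative.\<close>
lemma smul_sigma_shift: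
  fixes f h :: "'k poly"
  assumes deg_f: "degree f \<le> s" and deg_h: "degree h \<le> L"
  shows "smul q (sigma_shift q s f) (sigma_shift_lr q 0 L h) = sigma_shift_lr q s L (tmul q f h)"
proof
  fix n
  show "smul q (sigma_shift q s f) (sigma_shift_lr q 0 L h) n = sigma_shift_lr q s L (tmul q f h) n"
  proof (cases "n \<le> s + L")
    case False
    then show ?thesis
      by (auto simp: smul_def sigma_shift_def sigma_shift_lr_def intro!: sum.neutral)
  next
    case True
    define G where "G = (\<lambda>a. (Frob_inv ^^ s) (coeff f a) * (Frob_inv ^^ (s - a)) (coeff h (s + L - n - a)))"
    have "sigma_shift_lr q s L (tmul q f h) n
        = (\<Sum>a\<le>s + L - n. (Frob_inv ^^ s) (coeff f a) * (Frob_inv ^^ s) ((Frob ^^ a) (coeff h (s + L - n - a))))"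
      using True by (simp add: sigma_shift_lr_def tmul_coeff funpow_frob_inv_sum)
    also have "\<dots> = (\<Sum>a\<le>s + L - n. if a \<in> {..s} then G a else 0)"
      using deg_f by (intro sum.cong) (auto simp: G_def funpow_frob_inv_funpow_frob coeff_eq_0)
    also have "\<dots> = sum G ({..s + L - n} \<inter> {..s})"
      by (rule sum.inter_restrict[symmetric]) simp
    also have "\<dots> = sum G {a. a \<le> s \<and> s - a \<le> n \<and> a \<le> s + L - n}"
      using deg_h by (intro sum.mono_neutral_right) (auto simp: G_def dest: le_degree)
    also have "\<dots> = (\<Sum>i\<in>{..n} \<inter> {i. i \<le> s \<and> n - i \<le> L}. G (s - i))"
      using True by (intro sum.reindex_bij_witness[where i = "\<lambda>a. s - a" and j = "\<lambda>i. s - i"]) auto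
    also have "\<dots> = (\<Sum>i\<le>n. if i \<in> {i. i \<le> s \<and> n - i \<le> L} then G (s - i) else 0)"
      by (simp add: sum.inter_restrict)
    also have "\<dots> = smul q (sigma_shift q s f) (sigma_shift_lr q 0 L h) n"
      unfolding smul_def using True
      by (intro sum.cong) (auto simp: sigma_shift_def sigma_shift_lr_def G_def)
    finally show ?thesis ..
  qed
qed

lemma smatvec_linear_combination:
  fixes A :: "nat \<Rightarrow> nat \<Rightarrow> nat \<Rightarrow> 'k" and z :: "'a \<Rightarrow> nat \<Rightarrow> 'k"
  shows "smatvec q c A (\<lambda>col n. \<Sum>a\<in>S. smul q (xs a col) (z a) n) b
    = (\<lambda>n. \<Sum>a\<in>S. smul q (smatvec q c A (xs a) b) (z a) n)"
proof
  fix n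
  have "smatvec q c A (\<lambda>col n. \<Sum>a\<in>S. smul q (xs a col) (z a) n) b n
      = (\<Sum>col<c. \<Sum>a\<in>S. smul q (smul q (A b col) (xs a col)) (z a) n)"
    by (simp add: smatvec_def smul_sum_right smul_assoc)
  also have "\<dots> = (\<Sum>a\<in>S. \<Sum>col<c. smul q (smul q (A b col) (xs a col)) (z a) n)"
    by (rule sum.swap)
  also have "\<dots> = (\<Sum>a\<in>S. smul q (smatvec q c A (xs a) b) (z a) n)"
    by (simp add: smatvec_def smul_sum_left)
  finally show "smatvec q c A (\<lambda>col n. \<Sum>a\<in>S. smul q (xs a col) (z a) n) b n
      = (\<Sum>a\<in>S. smul q (smatvec q c A (xs a) b) (z a) n)" .
qed

lemma smul_const_right: "smul q f (\<lambda>n. if n = 0 then c else 0) n = f n * (Frob_inv ^^ n) (c :: 'k)"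
proof -
  have "smul q f (\<lambda>n. if n = 0 then c else 0) n = (\<Sum>i\<le>n. if i = n then f n * (Frob_inv ^^ n) c else 0)"
    unfolding smul_def by (intro sum.cong) auto
  then show ?thesis
    by simp
qed

text \<open>It suffices to reach \<open>\<sigma>\<^sup>m\<close> times each unit vector: the general case is a \<open>K\<close>-linear
  combination, with coefficients twisted by \<open>Frob\<^sup>m\<close> since they sit to the right of \<open>\<sigma>\<^sup>m\<close>.\<close>
lemma sigma_pow_in_colspace_if_unit_vectors:
  fixes A :: "nat \<Rightarrow> nat \<Rightarrow> nat \<Rightarrow> 'k"
  assumes "\<And>a. a < r \<Longrightarrow> \<exists>x. \<forall>b<r. \<forall>n\<le>m. smatvec q c A x b n = (if n = m \<and> b = a then 1 else 0)"
  shows "sigma_pow_in_colspace q r c m A"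
proof -
  obtain xs where xs: "\<And>a b n. a < r \<Longrightarrow> b < r \<Longrightarrow> n \<le> m \<Longrightarrow>
      smatvec q c A (xs a) b n = (if n = m \<and> b = a then 1 else 0)"
    using assms by metis
  show ?thesis
    unfolding sigma_pow_in_colspace_def
  proof
    fix \<kappa> :: "nat \<Rightarrow> 'k"
    define z :: "nat \<Rightarrow> nat \<Rightarrow> 'k" where "z = (\<lambda>a n. if n = 0 then (Frob ^^ m) (\<kappa> a) else 0)"
    define x where "x = (\<lambda>col n. \<Sum>a<r. smul q (xs a col) (z a) n)"
    have "smatvec q c A x b n = (if n = m then \<kappa> b else 0)" if "b < r" "n \<le> m" for b n
    proof -
      have "smatvec q c A x b n = (\<Sum>a<r. smatvec q c A (xs a) b n * (Frob_inv ^^ n) ((Frob ^^ m) (\<kappa> a)))"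
        unfolding x_def smatvec_linear_combination by (simp add: z_def smul_const_right)
      also have "\<dots> = (\<Sum>a<r. if a = b then (if n = m then \<kappa> b else 0) else 0)"
        using xs that by (intro sum.cong) auto
      finally show ?thesis
        using that by simp
    qed
    then show "\<exists>x. \<forall>b<r. \<forall>n\<le>m. smatvec q c A x b n = (if n = m then \<kappa> b else 0)"
      by blast
  qed
qed

end

section \<open>The block row of a \<open>t\<close>-finite \<open>t\<close>-module\<close>

lemma sum_div_mod: "(\<Sum>col<n * d. g (col div d) (col mod d)) = (\<Sum>j<n. \<Sum>k<(d::nat). g j k)"
proof -
  have "(\<Sum>col\<in>{j * d..<j * d + d}. g (col div d) (col mod d)) = (\<Sum>k<d. g j k)" for j
  proof (cases "d = 0")
    case False
    have "(\<Sum>col\<in>{j * d..<j * d + d}. g (col div d) (col mod d))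
        = (\<Sum>k\<in>{0..<d}. g ((k + j * d) div d) ((k + j * d) mod d))"
      using sum.shift_bounds_nat_ivl[of "\<lambda>col. g (col div d) (col mod d)" 0 "j * d" d]
      by (simp add: add.commute)
    with False show ?thesis
      by (simp add: atLeast0LessThan)
  qed simp
  then show ?thesis
    by (simp flip: sum.nat_group)
qed

definition tmat_expansion :: "nat \<Rightarrow> nat \<Rightarrow> (nat \<Rightarrow> nat \<Rightarrow> 'k::field poly) \<Rightarrow> nat
    \<Rightarrow> (nat \<Rightarrow> nat \<Rightarrow> 'k poly) \<Rightarrow> nat \<Rightarrow> 'k poly" where
  "tmat_expansion q d D N h i = (\<Sum>j<N. \<Sum>k<d. tmul q (tmatpow q d D j i k) (h j k))"

lemma degree_tmatpow_le_max_tau_deg: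
  assumes "k \<le> n" "i < d" "j < d"
  shows "degree (tmatpow q d D k i j) \<le> max_tau_deg q d D n"
proof (cases "k = 0")
  case False
  have "{degree (tmatpow q d D k i j) | k i j. 1 \<le> k \<and> k \<le> n \<and> i < d \<and> j < d}
      \<subseteq> (\<lambda>(k, i, j). degree (tmatpow q d D k i j)) ` ({1..n} \<times> {..<d} \<times> {..<d})"
    by force
  then have "finite {degree (tmatpow q d D k i j) | k i j. 1 \<le> k \<and> k \<le> n \<and> i < d \<and> j < d}"
    by (rule finite_subset) simp
  with assms False show ?thesis
    unfolding max_tau_deg_def by (intro Max_ge) auto
qed simp

context frobenius_field
begin

text \<open>\<open>t\<close>-finiteness: every vector of the dual \<open>t\<close>-motive is a \<open>K[t]\<close>-combination of finitely many
  generators, hence of the form \<open>\<Sum>\<^sub>j D\<^sup>j h\<^sub>j\<close> with \<open>\<tau>\<close>-degrees of the \<open>h\<^sub>j\<close> bounded independently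
  of the vector.\<close>
lemma t_finite_expansion:
  fixes D :: "nat \<Rightarrow> nat \<Rightarrow> 'k poly"
  assumes "t_finite q d D"
  obtains L where "\<And>v. \<forall>\<^sub>F N in sequentially. \<exists>h. (\<forall>j k. k < d \<longrightarrow> degree (h j k) \<le> L)
    \<and> (\<forall>i<d. v i = tmat_expansion q d D N h i)"
proof -
  obtain r :: nat and gens :: "nat \<Rightarrow> nat \<Rightarrow> 'k poly" where gens: "\<forall>v :: nat \<Rightarrow> 'k poly. \<exists>N c. \<forall>i<d.
      v i = (\<Sum>g<r. \<Sum>j<N. tmul q (tmatvec q d (tmatpow q d D j) (gens g) i) [:c g j:])"
    using assms unfolding t_finite_def by blast
  define L where "L = Max (insert 0 ((\<lambda>(g, k). degree (gens g k)) ` ({..<r} \<times> {..<d})))"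
  have deg_gens: "degree (gens g k) \<le> L" if "g < r" "k < d" for g k
    unfolding L_def using that by (intro Max_ge) auto
  have "\<forall>\<^sub>F N in sequentially. \<exists>h. (\<forall>j k. k < d \<longrightarrow> degree (h j k) \<le> L)
    \<and> (\<forall>i<d. v i = tmat_expansion q d D N h i)" for v
  proof -
    obtain N c where c: "\<forall>i<d.
        v i = (\<Sum>g<r. \<Sum>j<N. tmul q (tmatvec q d (tmatpow q d D j) (gens g) i) [:c g j:])"
      using gens by blast
    define h where "h j k = (if j < N then \<Sum>g<r. tmul q (gens g k) [:c g j:] else 0)" for j k
    have "degree (tmul q (gens g k) [:c g j:]) \<le> L" if "g < r" "k < d" for g j k
      using degree_tmul_le[of "gens g k" "[:c g j:]"] deg_gens[OF that] by simp
    then have "degree (h j k) \<le> L" if "k < d" for j k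
      unfolding h_def using that by (auto intro!: degree_sum_le)
    moreover have "v i = tmat_expansion q d D N' h i" if "N \<le> N'" "i < d" for N' i
    proof -
      have "v i = (\<Sum>g<r. \<Sum>j<N. \<Sum>k<d. tmul q (tmatpow q d D j i k) (tmul q (gens g k) [:c g j:]))"
        using c that by (simp add: tmatvec_def tmul_sum_left tmul_assoc_const)
      also have "\<dots> = tmat_expansion q d D N h i"
        by (simp add: tmat_expansion_def h_def tmul_sum_right sum.swap[of _ "{..<r}"])
      also have "\<dots> = tmat_expansion q d D N' h i"
        unfolding tmat_expansion_def using that
        by (intro sum.mono_neutral_left) (auto simp: h_def tmul_0_right)
      finally show ?thesis .
    qed
    ultimately show ?thesis
      unfolding eventually_sequentially by blast
  qed
  then show ?thesis
    by (rule that)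
qed

lemma degree_tmat_expansion_le:
  fixes D h :: "nat \<Rightarrow> nat \<Rightarrow> 'k poly"
  assumes "\<And>j k. j < N \<Longrightarrow> k < d \<Longrightarrow> degree (tmatpow q d D j i k) \<le> s"
    and "\<And>j k. k < d \<Longrightarrow> degree (h j k) \<le> L"
  shows "degree (tmat_expansion q d D N h i) \<le> s + L"
  unfolding tmat_expansion_def
proof (intro degree_sum_le)
  fix j k assume "j \<in> {..<N}" "k \<in> {..<d}"
  with assms have "degree (tmatpow q d D j i k) + degree (h j k) \<le> s + L"
    by (simp add: add_mono)
  then show "degree (tmul q (tmatpow q d D j i k) (h j k)) \<le> s + L"
    using degree_tmul_le order.trans by blast
qed auto

text \<open>Applying \<open>\<sigma>\<^sup>s(\<cdot>)\<sigma>\<^sup>L\<close> to \<open>\<tau>\<^sup>L\<^sup>+\<^sup>1 e\<^sub>a = \<Sum>\<^sub>j\<^sub>\<le>\<^sub>n D\<^sup>j h\<^sub>j\<close> gives \<open>\<sigma>\<^sup>m e\<^sub>a\<close> for \<open>s = m + 1\<close>;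
  modulo \<open>\<sigma>\<^sup>s\<close> the \<open>j = 0\<close> term vanishes because \<open>deg h\<^sub>0 \<le> L\<close>.\<close>
lemma block_row_sigma_pow_in_colspace:
  fixes D :: "nat \<Rightarrow> nat \<Rightarrow> 'k poly"
  assumes deg_D: "\<And>j i k. j \<le> n \<Longrightarrow> i < d \<Longrightarrow> k < d \<Longrightarrow> degree (tmatpow q d D j i k) \<le> Suc m"
    and expansion: "\<forall>a<d. \<exists>h. (\<forall>j k. k < d \<longrightarrow> degree (h j k) \<le> L)
      \<and> (\<forall>i<d. (if i = a then monom 1 (Suc L) else 0) = tmat_expansion q d D (Suc n) h i)"
  shows "sigma_pow_in_colspace q d (n * d) m (block_row q d D n (Suc m))"
proof (rule sigma_pow_in_colspace_if_unit_vectors)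
  fix a assume "a < d"
  then obtain h where deg_h: "\<forall>j k. k < d \<longrightarrow> degree (h j k) \<le> L"
    and h: "\<forall>i<d. (if i = a then monom 1 (Suc L) else 0) = tmat_expansion q d D (Suc n) h i"
    using expansion by blast
  define x where "x col = sigma_shift_lr q 0 L (h (Suc (col div d)) (col mod d))" for col
  define X where "X b l j = (\<Sum>k<d. sigma_shift_lr q (Suc m) L (tmul q (tmatpow q d D j b k) (h j k)) l)"
    for b l j
  have "smatvec q (n * d) (block_row q d D n (Suc m)) x b l = (if l = m \<and> b = a then 1 else 0)"
    if b: "b < d" and l: "l \<le> m" for b l
  proof -
    have "smatvec q (n * d) (block_row q d D n (Suc m)) x b l
        = (\<Sum>j<n. \<Sum>k<d. smul q (sigma_shift q (Suc m) (tmatpow q d D (Suc j) b k))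
            (sigma_shift_lr q 0 L (h (Suc j) k)) l)"
      unfolding smatvec_def block_row_def x_def by (subst sum_div_mod[symmetric]) simp
    also have "\<dots> = (\<Sum>j<n. X b l (Suc j))"
      unfolding X_def using b deg_D deg_h by (intro sum.cong) (simp_all add: smul_sigma_shift del: tmatpow.simps)
    also have "\<dots> = (\<Sum>j<Suc n. X b l j)"
    proof -
      have "degree (h 0 b) \<le> L"
        using deg_h b by simp
      then have "sigma_shift_lr q (Suc m) L (h 0 b) l = 0"
        using l by (auto simp: sigma_shift_lr_def intro!: coeff_eq_0)
      then have "X b l 0 = 0"
        unfolding X_def by (auto simp: tmul_1_left tmul_0_left intro!: sum.neutral)
      then show ?thesis
        unfolding sum.lessThan_Suc_shift by simp
    qed
    also have "\<dots> = sigma_shift_lr q (Suc m) L (tmat_expansion q d D (Suc n) h b) l"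
      by (simp add: X_def tmat_expansion_def sigma_shift_lr_sum del: sum.lessThan_Suc)
    also have "\<dots> = sigma_shift_lr q (Suc m) L (if b = a then monom 1 (Suc L) else 0) l"
      using h b by simp
    also have "\<dots> = (if l = m \<and> b = a then 1 else 0)"
      using l by (auto simp: sigma_shift_lr_def)
    finally show ?thesis .
  qed
  then show "\<exists>x. \<forall>b<d. \<forall>l\<le>m. smatvec q (n * d) (block_row q d D n (Suc m)) x b l
      = (if l = m \<and> b = a then 1 else 0)"
    by blast
qed

lemma block_row_rank_mod_sigma:
  fixes D :: "nat \<Rightarrow> nat \<Rightarrow> 'k poly"
  assumes deg_D: "\<And>j i k. j \<le> n \<Longrightarrow> i < d \<Longrightarrow> k < d \<Longrightarrow> degree (tmatpow q d D j i k) \<le> s"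
    and expansion: "\<forall>a<d. \<exists>h. (\<forall>j k. k < d \<longrightarrow> degree (h j k) \<le> L)
      \<and> (\<forall>i<d. (if i = a then monom 1 (Suc L) else 0) = tmat_expansion q d D (Suc n) h i)"
  shows "rank_mod_sigma q d (n * d) (block_row q d D n s) s d"
proof (cases "d = 0")
  case True
  then show ?thesis
    unfolding rank_mod_sigma_def sdiag_form_def by (auto intro: elem_reach.refl)
next
  case False
  then obtain h where deg_h: "\<forall>j k. k < d \<longrightarrow> degree (h j k) \<le> L"
    and h: "monom 1 (Suc L) = tmat_expansion q d D (Suc n) h 0"
    using expansion[rule_format, of 0] False by auto
  have "degree (tmat_expansion q d D (Suc n) h 0) \<le> s + L"
    using deg_D deg_h False by (intro degree_tmat_expansion_le) auto
  then have "Suc L \<le> s + L"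
    by (simp flip: h add: degree_monom_eq)
  then obtain m where s: "s = Suc m"
    using not0_implies_Suc by fastforce
  have "sigma_pow_in_colspace q d (n * d) m (block_row q d D n s)"
    using deg_D expansion unfolding s by (rule block_row_sigma_pow_in_colspace)
  then show ?thesis
    unfolding s by (rule rank_mod_sigma_if_sigma_pow_in_colspace)
qed

lemma t_finite_unit_vector_expansions:
  fixes D :: "nat \<Rightarrow> nat \<Rightarrow> 'k poly"
  assumes "t_finite q d D"
  obtains n L where "1 \<le> n" and "\<forall>a<d. \<exists>h. (\<forall>j k. k < d \<longrightarrow> degree (h j k) \<le> L)
      \<and> (\<forall>i<d. (if i = a then monom 1 (Suc L) else 0) = tmat_expansion q d D (Suc n) h i)"
proof -
  obtain L where expansion: "\<And>v. \<forall>\<^sub>F N in sequentially. \<exists>h. (\<forall>j k. k < d \<longrightarrow> degree (h j k) \<le> L)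
      \<and> (\<forall>i<d. v i = tmat_expansion q d D N h i)"
    using t_finite_expansion[OF assms] by blast
  have "\<forall>\<^sub>F N in sequentially. \<forall>a\<in>{..<d}. \<exists>h. (\<forall>j k. k < d \<longrightarrow> degree (h j k) \<le> L)
      \<and> (\<forall>i<d. (if i = a then monom 1 (Suc L) else 0) = tmat_expansion q d D N h i)"
    (is "eventually ?P sequentially")
    by (intro eventually_ball_finite ballI expansion) simp
  then obtain N where "\<And>N'. N \<le> N' \<Longrightarrow> ?P N'"
    unfolding eventually_sequentially by blast
  then have "?P (Suc (Suc N))"
    by simp
  then show ?thesis
    using that[of "Suc N" L] by simp
qed

end

lemma frobenius_field_prime_power:
  assumes "prime p" and "CHAR('k::field) = p" and "q = p ^ e" and "bij (\<lambda>x::'k. x ^ q)"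
  shows "frobenius_field TYPE('k) q"
proof
  show "0 < q"
    using assms(1,3) by (simp add: prime_gt_0_nat)
  show "frob q (x + y) = frob q x + frob q y" for x y :: 'k
    unfolding frob_def using assms(1-3) by (intro freshmans_dream') auto
  show "bij (frob q :: 'k \<Rightarrow> 'k)"
    using assms(4) by (simp add: frob_def[abs_def])
qed

theorem proposition6p5:
  fixes p e q d :: nat and \<theta> :: "'k::field" and D :: "nat \<Rightarrow> nat \<Rightarrow> 'k poly"
  assumes "prime p" and "e \<ge> 1" and "q = p ^ e"
    and "CHAR('k) = p"
    and "card {x::'k. x ^ q = x} = q"
    and "bij (\<lambda>x::'k. x ^ q)"
    and "is_tmodule \<theta> d D"
    and "t_finite q d D"
  shows "\<exists>n\<ge>1. rank_mod_sigma q d (n * d)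
           (block_row q d D n (max_tau_deg q d D n)) (max_tau_deg q d D n) d"
proof -
  interpret frobenius_field "TYPE('k)" q
    using assms(1,4,3,6) by (rule frobenius_field_prime_power)
  obtain n L where "1 \<le> n" and expansion: "\<forall>a<d. \<exists>h. (\<forall>j k. k < d \<longrightarrow> degree (h j k) \<le> L)
      \<and> (\<forall>i<d. (if i = a then monom 1 (Suc L) else 0) = tmat_expansion q d D (Suc n) h i)"
    using t_finite_unit_vector_expansions[OF assms(8)] by blast
  have "rank_mod_sigma q d (n * d) (block_row q d D n (max_tau_deg q d D n)) (max_tau_deg q d D n) d"
    using degree_tmatpow_le_max_tau_deg expansion by (rule block_row_rank_mod_sigma)
  with \<open>1 \<le> n\<close> show ?thesis
    by (intro exI[of _ n]) simp
qed

end
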